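(* Let $p\in(0,1)$, $\beta\in\mathbb{R}$, $l\ge1$ and $1\le n\le l$ be fixed, let $\theta=0$, and for $k\in\{0,\dots,3^n-1\}$ set $\alpha=\frac{k}{3^n}$. There exists a polynomial $R_{p,\beta,\frac{k}{3^n},0}$ of degree $3^n$ such that $$\sigma\Big(H^{(l)}_{p,\beta,\frac{k}{3^n},0}\Big)=R^{-1}_{p,\beta,\frac{k}{3^n},0}\Big(\sigma(\Delta_p^{(l-n)})\setminus\sigma(\Delta^{(0)})\Big)\ \cup\ \sigma\Big(H^{(n)}_{p,\beta,\frac{k}{3^n},0}\Big).$$ Furthermore, for $n=1$ and $k\in\{1,2\}$ the polynomial is $$R_{p,\beta,\frac{k}{3},0}(z)=\frac{(-\beta+2p-2z)\,(\beta^2+2\beta p+\beta z-2pz-2p-2z^2+2)}{4p(1-p)}.$$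
   Context: For $x\in\mathbb{Z}_+\setminus\{0\}$ let $m(x)$ be the largest integer $m\ge0$ with $3^m\mid x$. For $x\ge1$ set $p(x,x-1)=1-p,\ p(x,x+1)=p$ if $3^{-m(x)}x\equiv1\pmod3$, and $p(x,x-1)=p,\ p(x,x+1)=1-p$ if $3^{-m(x)}x\equiv2\pmod3$. Let $V_l=\{0,1,\dots,3^l\}$. The level-$l$ self-similar almost Mathieu operator $H^{(l)}_{p,\beta,\alpha,\theta}$ acts on $f:V_l\to\mathbb{C}$ by $(H^{(l)}f)(0)=\beta\cos(\theta)f(0)-f(1)$, $(H^{(l)}f)(3^l)=\beta\cos(2\pi\alpha3^l+\theta)f(3^l)-f(3^l-1)$, and for $1\le x\le 3^l-1$: $(H^{(l)}f)(x)=\beta\cos(2\pi\alpha x+\theta)f(x)-p(x,x-1)f(x-1)-p(x,x+1)f(x+1)$; it is regarded as a $(3^l+1)\times(3^l+1)$ matrix and $\sigma$ denotes its set of eigenvalues. The level-$l$ Laplacian $\Delta^{(l)}_p$ on $V_l$ is $(\Delta^{(l)}_pf)(0)=f(0)-f(1)$, $(\Delta_p^{(l)}f)(x)=f(x)-p(x,x-1)f(x-1)-p(x,x+1)f(x+1)$ for $1\le x\le3^l-1$, and $(\Delta^{(l)}_pf)(3^l)=f(3^l)-f(3^l-1)$; in particular $\Delta^{(0)}=\begin{pmatrix}1&-1\\-1&1\end{pmatrix}$, with $\sigma(\Delta^{(0)})=\{0,2\}$. For a polynomial $R$ and a set $A$, $R^{-1}(A)=\{z\in\mathbb{C}: R(z)\in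 A\}$. *)

theory Defs
  imports Complex_Main "HOL-Computational_Algebra.Polynomial"
begin

definition m3 :: "nat \<Rightarrow> nat" where
  "m3 x = (GREATEST m. (3::nat) ^ m dvd x)"

definition trans_p :: "real \<Rightarrow> nat \<Rightarrow> nat \<Rightarrow> real" where
  "trans_p p x y =
     (let r = (x div 3 ^ m3 x) mod 3 in
      if y + 1 = x then (if r = 1 then 1 - p else if r = 2 then p else 0)
      else if y = x + 1 then (if r = 1 then p else if r = 2 then 1 - p else 0)
      else 0)"

text \<open>Matrix of the level-l self-similar almost Mathieu operator on V_l = {0..3^l},
  indexed by i, j \<in> {0..3^l}: (H f)(i) = \<Sum>j. H i j * f j.\<close>
definition H_mat :: "real \<Rightarrow> real \<Rightarrow> real \<Rightarrow> real \<Rightarrow> nat \<Rightarrow> nat \<Rightarrow> nat \<Rightarrow> real" where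
  "H_mat p \<beta> \<alpha> \<theta> l i j =
     (if i = 0 then (if j = 0 then \<beta> * cos \<theta> else if j = 1 then -1 else 0)
      else if i = 3 ^ l then
        (if j = 3 ^ l then \<beta> * cos (2 * pi * \<alpha> * 3 ^ l + \<theta>)
         else if j + 1 = 3 ^ l then -1 else 0)
      else (if j = i then \<beta> * cos (2 * pi * \<alpha> * real i + \<theta>)
            else if j + 1 = i \<or> j = i + 1 then - trans_p p i j else 0))"

definition Lap_mat :: "real \<Rightarrow> nat \<Rightarrow> nat \<Rightarrow> nat \<Rightarrow> real" where
  "Lap_mat p l i j =
     (if i = 0 then (if j = 0 then 1 else if j = 1 then -1 else 0)
      else if i = 3 ^ l then
        (if j = 3 ^ l then 1 else if j + 1 = 3 ^ l then -1 else 0)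
      else (if j = i then 1
            else if j + 1 = i \<or> j = i + 1 then - trans_p p i j else 0))"

definition mat_spec :: "nat \<Rightarrow> (nat \<Rightarrow> nat \<Rightarrow> real) \<Rightarrow> complex set" where
  "mat_spec N A = {z. \<exists>f :: nat \<Rightarrow> complex. (\<exists>x\<le>N. f x \<noteq> 0) \<and>
       (\<forall>i\<le>N. (\<Sum>j\<le>N. complex_of_real (A i j) * f j) = z * f i)}"

definition sigma_H :: "real \<Rightarrow> real \<Rightarrow> real \<Rightarrow> real \<Rightarrow> nat \<Rightarrow> complex set" where
  "sigma_H p \<beta> \<alpha> \<theta> l = mat_spec (3 ^ l) (H_mat p \<beta> \<alpha> \<theta> l)"

definition sigma_Lap :: "real \<Rightarrow> nat \<Rightarrow> complex set" where
  "sigma_Lap p l = mat_spec (3 ^ l) (Lap_mat p l)"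

definition poly_preimage :: "real poly \<Rightarrow> complex set \<Rightarrow> complex set" where
  "poly_preimage R A = {z. poly (map_poly complex_of_real R) z \<in> A}"

end

theory Submission
  imports Defs
begin

(* An eigenvector of a tridiagonal matrix with nonzero off-diagonal entries is determined by its
   first entry through the three-term recurrence, so z is an eigenvalue exactly when the solution
   started at the left end satisfies the boundary condition at the right end.

   For alpha = k / 3^n the level-l chain is 3^n-periodic inside cells, every cell is reflection
   symmetric, and at the multiples of N = 3^n the transition probabilities repeat those of the
   level-(l - n) chain. Crossing one cell therefore maps (f (N j), f (N j + 1)) by a fixed
   unimodular matrix built from the two fundamental solutions P, Q of a cell, and the samples
   f (N j) solve the level-(l - n) Laplacian recurrence with spectral parameter
   R z = 1 - P N - (beta - z) Q N. The boundary condition of H at 3^l turns into the Laplacian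
   boundary condition at R z, except where R z is 0 or 2; there it degenerates into the single-cell
   condition, which describes the spectrum of H at level n. *)

section \<open>Three-term recurrences\<close>

fun three_term :: "(nat \<Rightarrow> 'a::field) \<Rightarrow> (nat \<Rightarrow> 'a) \<Rightarrow> (nat \<Rightarrow> 'a) \<Rightarrow> 'a \<Rightarrow> 'a \<Rightarrow> 'a \<Rightarrow> nat \<Rightarrow> 'a"
  where
    "three_term a b V z u v 0 = u"
  | "three_term a b V z u v (Suc 0) = v"
  | "three_term a b V z u v (Suc (Suc y)) =
       ((V (Suc y) - z) * three_term a b V z u v (Suc y) - a (Suc y) * three_term a b V z u v y)
       / b (Suc y)"

lemma three_term_step:
  assumes "1 \<le> y" "b y \<noteq> 0"
  shows "b y * three_term a b V z u v (y + 1) =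
    (V y - z) * three_term a b V z u v y - a y * three_term a b V z u v (y - 1)"
  using assms by (cases y) auto

lemma three_term_linear:
  "three_term a b V z u v y = u * three_term a b V z 1 0 y + v * three_term a b V z 0 1 y"
  by (induction y rule: induct_nat_012) (simp_all add: divide_inverse algebra_simps)

lemma three_term_unique:
  assumes rec: "\<And>y. 1 \<le> y \<Longrightarrow> y < M \<Longrightarrow> b y * h (y + 1) = (V y - z) * h y - a y * h (y - 1)"
    and b: "\<And>y. 1 \<le> y \<Longrightarrow> y < M \<Longrightarrow> b y \<noteq> 0" and "y \<le> M"
  shows "h y = three_term a b V z (h 0) (h 1) y"
proof -
  let ?f = "three_term a b V z (h 0) (h 1)"
  have pair: "h y = ?f y \<and> h (Suc y) = ?f (Suc y)" if "y < M" for y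
    using that
  proof (induction y)
    case (Suc y)
    then show ?case using rec[of "Suc y"] b[of "Suc y"] by (simp add: eq_divide_eq mult.commute)
  qed simp
  show ?thesis
  proof (cases y)
    case (Suc x)
    then show ?thesis using pair[of x] \<open>y \<le> M\<close> by simp
  qed simp
qed

lemma three_term_wronskian:
  "three_term a b V z 1 0 y * three_term a b V z 0 1 (Suc y)
     - three_term a b V z 1 0 (Suc y) * three_term a b V z 0 1 y = (\<Prod>i=1..y. a i / b i)"
proof (induction y)
  case (Suc y)
  let ?P = "three_term a b V z 1 0" and ?Q = "three_term a b V z 0 1"
  have "?P (Suc y) * ?Q (Suc (Suc y)) - ?P (Suc (Suc y)) * ?Q (Suc y) =
      a (Suc y) / b (Suc y) * (?P y * ?Q (Suc y) - ?P (Suc y) * ?Q y)"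
    by (simp add: divide_inverse algebra_simps)
  with Suc.IH show ?case by (simp add: prod.cl_ivl_Suc mult.commute)
qed simp

lemma three_term_reflected_solution:
  fixes h :: "nat \<Rightarrow> 'a::field"
  assumes sol: "\<And>y. 1 \<le> y \<Longrightarrow> y < N \<Longrightarrow> b y * h (y + 1) = (V y - z) * h y - a y * h (y - 1)"
    and sym: "\<And>y. 1 \<le> y \<Longrightarrow> y < N \<Longrightarrow> a (N - y) = b y \<and> V (N - y) = V y"
    and y: "1 \<le> y" "y < N"
  shows "b y * h (N - (y + 1)) = (V y - z) * h (N - y) - a y * h (N - (y - 1))"
proof -
  have y': "1 \<le> N - y" "N - y < N" using y by simp_all
  have "b (N - y) * h (N - y + 1) = (V (N - y) - z) * h (N - y) - a (N - y) * h (N - y - 1)"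
    using sol[OF y'] .
  moreover have "b (N - y) = a y" using sym[OF y'] y by simp
  moreover have "a (N - y) = b y" "V (N - y) = V y" using sym[OF y] by auto
  moreover have "N - y + 1 = N - (y - 1)" "N - y - 1 = N - (y + 1)" using y by auto
  ultimately show ?thesis by (simp add: algebra_simps)
qed

lemma three_term_symmetric_cell:
  fixes a b V :: "nat \<Rightarrow> 'a::field" and z :: 'a
  assumes N: "2 \<le> N" and b: "\<And>y. 1 \<le> y \<Longrightarrow> y < N \<Longrightarrow> b y \<noteq> 0"
    and sym: "\<And>y. 1 \<le> y \<Longrightarrow> y < N \<Longrightarrow> a (N - y) = b y \<and> V (N - y) = V y"
  defines "P \<equiv> three_term a b V z 1 0" and "Q \<equiv> three_term a b V z 0 1"
  shows "P (N - 1) * Q N - P N * Q (N - 1) = 1" and "Q (N - 1) = - P N"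
proof -
  have "b (N - i) = a i" if "i \<in> {1..N-1}" for i
    using sym[of "N - i"] that by auto
  then have "(\<Prod>i=1..N-1. a i) = (\<Prod>i=1..N-1. b i)"
    by (intro prod.reindex_bij_witness[of _ "\<lambda>i. N - i" "\<lambda>i. N - i"]) auto
  moreover have "(\<Prod>i=1..N-1. b i) \<noteq> 0" using b by (auto simp: prod_zero_iff)
  ultimately show W: "P (N - 1) * Q N - P N * Q (N - 1) = 1"
    using three_term_wronskian[of a b V z "N - 1"] N by (simp add: P_def Q_def prod_dividef)
  \<comment> \<open>F vanishes at N, and reflecting a solution gives a solution, so F (N - y) is a multiple of Q.\<close>
  define F where "F = three_term a b V z (- Q N) (P N)"
  have F: "F y = P N * Q y - Q N * P y" for y
    unfolding F_def P_def Q_def by (subst three_term_linear) (simp add: algebra_simps)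
  have F_reflected: "F (N - y) = - Q y" if "y \<le> N" for y
  proof -
    have "F (N - y) = three_term a b V z (F (N - 0)) (F (N - 1)) y"
    proof (rule three_term_unique[where h = "\<lambda>y. F (N - y)", OF _ _ that])
      fix y assume y: "1 \<le> y" "y < N"
      show "b y * F (N - (y + 1)) = (V y - z) * F (N - y) - a y * F (N - (y - 1))"
      proof (rule three_term_reflected_solution[where h = F and a = a and b = b and V = V,
            OF _ sym y])
        fix x assume "1 \<le> x" "x < N"
        then show "b x * F (x + 1) = (V x - z) * F x - a x * F (x - 1)"
          unfolding F_def using b by (intro three_term_step) auto
      qed
      show "b y \<noteq> 0" using b y .
    qed
    also have "\<dots> = - Q y"
      using W by (subst three_term_linear) (simp add: F Q_def algebra_simps)
    finally show ?thesis .
  qed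
  have "F 1 = - Q (N - 1)" using F_reflected[of "N - 1"] N by simp
  then show "Q (N - 1) = - P N" by (simp add: F P_def Q_def)
qed

lemma three_term_periodic_cell:
  fixes a b V :: "nat \<Rightarrow> 'a::field" and z u v :: 'a
  assumes b: "\<And>x. 0 < x \<Longrightarrow> b x \<noteq> 0"
    and per: "\<And>y. 0 < y \<Longrightarrow> y < N \<Longrightarrow>
      a (N * j + y) = a y \<and> b (N * j + y) = b y \<and> V (N * j + y) = V y"
    and "y \<le> N"
  defines "f \<equiv> three_term a b V z u v"
  shows "f (N * j + y) =
    f (N * j) * three_term a b V z 1 0 y + f (N * j + 1) * three_term a b V z 0 1 y"
proof -
  have "f (N * j + y) = three_term a b V z (f (N * j + 0)) (f (N * j + 1)) y"
  proof (rule three_term_unique[where h = "\<lambda>y. f (N * j + y)", OF _ _ \<open>y \<le> N\<close>])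
    fix y assume y: "1 \<le> y" "y < N"
    have "b (N * j + y) * f (N * j + y + 1) =
        (V (N * j + y) - z) * f (N * j + y) - a (N * j + y) * f (N * j + y - 1)"
      unfolding f_def using y b by (intro three_term_step) auto
    then show "b y * f (N * j + (y + 1)) = (V y - z) * f (N * j + y) - a y * f (N * j + (y - 1))"
      using per[of y] y by (simp add: add.assoc)
    show "b y \<noteq> 0" using b y by simp
  qed
  then show ?thesis using three_term_linear[of a b V z "f (N * j)" "f (N * j + 1)" y] by simp
qed

definition tridiag :: "nat \<Rightarrow> real \<Rightarrow> real \<Rightarrow> (nat \<Rightarrow> real) \<Rightarrow> (nat \<Rightarrow> real) \<Rightarrow> (nat \<Rightarrow> real)
    \<Rightarrow> nat \<Rightarrow> nat \<Rightarrow> real" where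
  "tridiag L Vleft Vright V a b i j =
    (if i = 0 then (if j = 0 then Vleft else if j = 1 then -1 else 0)
     else if i = L then (if j = L then Vright else if j + 1 = L then -1 else 0)
     else if j = i then V i else if j + 1 = i then - a i else if j = i + 1 then - b i else 0)"

lemma tridiag_row_sum:
  fixes g :: "nat \<Rightarrow> complex"
  assumes "1 \<le> L" "i \<le> L"
  shows "(\<Sum>j\<le>L. of_real (tridiag L Vleft Vright V a b i j) * g j) =
     (if i = 0 then Vleft * g 0 - g 1 else if i = L then Vright * g L - g (L - 1)
      else V i * g i - a i * g (i - 1) - b i * g (i + 1))"
proof -
  consider "i = 0" | "i = L" "i \<noteq> 0" | "0 < i" "i < L" using assms by linarith
  then show ?thesis
  proof cases
    case 1
    have "of_real (tridiag L Vleft Vright V a b i j) * g j =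
       (if j = 0 then Vleft * g 0 else 0) + (if j = 1 then - g 1 else 0)" for j
      using 1 by (simp add: tridiag_def)
    then show ?thesis using 1 assms by (simp add: sum.distrib)
  next
    case 2
    have "of_real (tridiag L Vleft Vright V a b i j) * g j =
       (if j = L then Vright * g L else 0) + (if j = L - 1 then - g (L - 1) else 0)" for j
      using 2 by (auto simp add: tridiag_def)
    then show ?thesis using 2 assms by (simp add: sum.distrib)
  next
    case 3
    have "of_real (tridiag L Vleft Vright V a b i j) * g j =
       (if j = i then V i * g i else 0) + (if j = i - 1 then - a i * g (i - 1) else 0)
        + (if j = i + 1 then - b i * g (i + 1) else 0)" for j
      using 3 by (auto simp add: tridiag_def)
    then show ?thesis using 3 assms by (simp add: sum.distrib)
  qed
qed

lemma tridiag_rows_imp_three_term: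
  fixes g :: "nat \<Rightarrow> complex"
  assumes L: "1 \<le> L" and b: "\<And>i. 0 < i \<Longrightarrow> i < L \<Longrightarrow> b i \<noteq> 0"
    and rows: "\<And>i. i < L \<Longrightarrow> (\<Sum>j\<le>L. of_real (tridiag L Vleft Vright V a b i j) * g j) = z * g i"
    and "y \<le> L"
  shows "g y = g 0 * three_term (of_real \<circ> a) (of_real \<circ> b) (of_real \<circ> V) z 1 (of_real Vleft - z) y"
proof -
  note row = tridiag_row_sum[OF L, where Vleft = Vleft and Vright = Vright and V = V and a = a
      and b = b and g = g]
  have g1: "g 1 = (of_real Vleft - z) * g 0"
    using rows[of 0] row[of 0] L by (simp add: algebra_simps)
  have "g y = three_term (of_real \<circ> a) (of_real \<circ> b) (of_real \<circ> V) z (g 0) (g 1) y"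
  proof (rule three_term_unique[OF _ _ \<open>y \<le> L\<close>])
    fix i assume i: "1 \<le> i" "i < L"
    then show "(of_real \<circ> b) i * g (i + 1) =
        ((of_real \<circ> V) i - z) * g i - (of_real \<circ> a) i * g (i - 1)"
      using rows[of i] row[of i] by (simp add: algebra_simps)
    show "(of_real \<circ> b) i \<noteq> 0" using b i by simp
  qed
  also have "\<dots> = g 0 * (three_term (of_real \<circ> a) (of_real \<circ> b) (of_real \<circ> V) z 1 0 y
      + (of_real Vleft - z) * three_term (of_real \<circ> a) (of_real \<circ> b) (of_real \<circ> V) z 0 1 y)"
    by (subst three_term_linear) (unfold g1, simp add: algebra_simps)
  also have "\<dots> =
      g 0 * three_term (of_real \<circ> a) (of_real \<circ> b) (of_real \<circ> V) z 1 (of_real Vleft - z) y"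
    using three_term_linear[of "of_real \<circ> a" "of_real \<circ> b" "of_real \<circ> V" z 1 "of_real Vleft - z" y]
    by simp
  finally show ?thesis .
qed

lemma three_term_tridiag_rows:
  fixes a b V :: "nat \<Rightarrow> real" and Vleft Vright :: real and z :: complex
  assumes L: "1 \<le> L" and b: "\<And>i. 0 < i \<Longrightarrow> i < L \<Longrightarrow> b i \<noteq> 0" and "i < L"
  defines "f \<equiv> three_term (of_real \<circ> a) (of_real \<circ> b) (of_real \<circ> V) z 1 (of_real Vleft - z)"
  shows "(\<Sum>j\<le>L. of_real (tridiag L Vleft Vright V a b i j) * f j) = z * f i"
proof -
  note row = tridiag_row_sum[OF L, where Vleft = Vleft and Vright = Vright and V = V and a = a
      and b = b and g = f]
  show ?thesis
  proof (cases "i = 0")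
    case True
    then show ?thesis using row[of 0] L by (simp add: f_def)
  next
    case False
    then have step:
      "of_real (b i) * f (i + 1) = (of_real (V i) - z) * f i - of_real (a i) * f (i - 1)"
      using three_term_step[of i "of_real \<circ> b" "of_real \<circ> a" "of_real \<circ> V" z 1
          "of_real Vleft - z"] b \<open>i < L\<close>
      by (simp add: f_def)
    have "(\<Sum>j\<le>L. of_real (tridiag L Vleft Vright V a b i j) * f j) =
        of_real (V i) * f i - of_real (a i) * f (i - 1) - of_real (b i) * f (i + 1)"
      using row[of i] False \<open>i < L\<close> by simp
    then show ?thesis by (simp only: step) (simp add: algebra_simps)
  qed
qed

lemma mat_spec_tridiag_iff:
  fixes a b V :: "nat \<Rightarrow> real" and Vleft Vright :: real and z :: complex
  assumes L: "1 \<le> L" and b: "\<And>i. 0 < i \<Longrightarrow> i < L \<Longrightarrow> b i \<noteq> 0"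
  defines "f \<equiv> three_term (of_real \<circ> a) (of_real \<circ> b) (of_real \<circ> V) z 1 (of_real Vleft - z)"
  shows "z \<in> mat_spec L (tridiag L Vleft Vright V a b) \<longleftrightarrow> (of_real Vright - z) * f L - f (L - 1) = 0"
proof
  assume "z \<in> mat_spec L (tridiag L Vleft Vright V a b)"
  then obtain g where nonzero: "\<exists>x\<le>L. g x \<noteq> 0"
    and rows: "\<And>i. i \<le> L \<Longrightarrow> (\<Sum>j\<le>L. of_real (tridiag L Vleft Vright V a b i j) * g j) = z * g i"
    unfolding mat_spec_def by blast
  have g: "g y = g 0 * f y" if "y \<le> L" for y
    unfolding f_def
  proof (rule tridiag_rows_imp_three_term[OF L b _ that])
    fix i assume "i < L"
    then show "(\<Sum>j\<le>L. of_real (tridiag L Vleft Vright V a b i j) * g j) = z * g i"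
      by (intro rows) simp
  qed
  have "g 0 \<noteq> 0"
  proof
    assume "g 0 = 0"
    then have "g x = 0" if "x \<le> L" for x using g[OF that] by simp
    then show False using nonzero by blast
  qed
  moreover have "g 0 * ((of_real Vright - z) * f L - f (L - 1)) = 0"
  proof -
    have "of_real Vright * g L - g (L - 1) = z * g L"
      using rows[of L] tridiag_row_sum[OF L order_refl, of Vleft Vright V a b g] L by simp
    then show ?thesis using g[of L] g[of "L - 1"] by (simp add: algebra_simps)
  qed
  ultimately show "(of_real Vright - z) * f L - f (L - 1) = 0" by simp
next
  assume boundary: "(of_real Vright - z) * f L - f (L - 1) = 0"
  have "(\<Sum>j\<le>L. of_real (tridiag L Vleft Vright V a b i j) * f j) = z * f i" if "i \<le> L" for i
  proof (cases "i = L")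
    case True
    then show ?thesis using tridiag_row_sum[OF L order_refl, of Vleft Vright V a b f] boundary L
      by (simp add: algebra_simps)
  next
    case False
    then show ?thesis unfolding f_def using three_term_tridiag_rows[OF L b] that by simp
  qed
  moreover have "f 0 \<noteq> 0" by (simp add: f_def)
  ultimately show "z \<in> mat_spec L (tridiag L Vleft Vright V a b)" unfolding mat_spec_def by blast
qed

lemma mat_spec_tridiag_1: "mat_spec 1 (tridiag 1 1 1 V a b) = {0, 2}"
proof (intro set_eqI)
  fix z :: complex
  have "z \<in> mat_spec 1 (tridiag 1 1 1 V a b) \<longleftrightarrow> (1 - z) * (1 - z) - 1 = 0"
    by (subst mat_spec_tridiag_iff) simp_all
  also have "\<dots> \<longleftrightarrow> z \<in> {0, 2}" by (auto simp: algebra_simps)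
  finally show "z \<in> mat_spec 1 (tridiag 1 1 1 V a b) \<longleftrightarrow> z \<in> {0, 2}" .
qed

fun three_term_poly :: "(nat \<Rightarrow> real) \<Rightarrow> (nat \<Rightarrow> real) \<Rightarrow> (nat \<Rightarrow> real) \<Rightarrow> real poly \<Rightarrow> real poly
    \<Rightarrow> nat \<Rightarrow> real poly" where
    "three_term_poly a b V u v 0 = u"
  | "three_term_poly a b V u v (Suc 0) = v"
  | "three_term_poly a b V u v (Suc (Suc y)) =
       smult (1 / b (Suc y)) ([:V (Suc y), -1:] * three_term_poly a b V u v (Suc y)
         - smult (a (Suc y)) (three_term_poly a b V u v y))"

lemma map_poly_of_real_add:
  "(map_poly of_real (p + q) :: 'a::real_algebra_1 poly) = map_poly of_real p + map_poly of_real q"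
  by (intro poly_eqI) (simp add: coeff_map_poly)

lemma map_poly_of_real_diff:
  "(map_poly of_real (p - q) :: 'a::real_algebra_1 poly) = map_poly of_real p - map_poly of_real q"
  by (intro poly_eqI) (simp add: coeff_map_poly)

lemma map_poly_of_real_smult:
  "(map_poly of_real (smult c p) :: 'a::{real_algebra_1, comm_ring_1} poly) =
    smult (of_real c) (map_poly of_real p)"
  by (intro poly_eqI) (simp add: coeff_map_poly)

lemma map_poly_of_real_mult:
  "(map_poly of_real (p * q) :: 'a::{real_algebra_1, comm_ring_1} poly) =
    map_poly of_real p * map_poly of_real q"
  by (induction p) (simp_all add: map_poly_of_real_add map_poly_of_real_smult map_poly_pCons)

lemma poly_three_term_poly:
  fixes z :: "'a::real_field"
  shows "poly (map_poly of_real (three_term_poly a b V u v y)) z =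
    three_term (of_real \<circ> a) (of_real \<circ> b) (of_real \<circ> V) z
      (poly (map_poly of_real u) z) (poly (map_poly of_real v) z) y"
proof (induction y rule: induct_nat_012)
  case (ge2 n)
  then show ?case
    by (simp only: three_term_poly.simps map_poly_of_real_diff map_poly_of_real_mult
        map_poly_of_real_smult poly_diff poly_mult poly_smult)
      (simp add: map_poly_pCons divide_inverse algebra_simps)
qed simp_all

lemma degree_three_term_poly_01:
  assumes b: "\<And>y. 0 < y \<Longrightarrow> b y \<noteq> 0"
  shows "three_term_poly a b V 0 1 (Suc y) \<noteq> 0 \<and> degree (three_term_poly a b V 0 1 (Suc y)) = y"
proof (induction y rule: induct_nat_012)
  case 1
  then show ?case using b[of 1] by simp
next
  case (ge2 n)
  let ?Q = "three_term_poly a b V 0 1"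
  have "degree ([:V (Suc (Suc n)), -1:] * ?Q (Suc (Suc n))) = Suc (Suc n)"
    using ge2.IH(2) by (subst degree_mult_eq) auto
  moreover have "degree (smult (a (Suc (Suc n))) (?Q (Suc n))) < Suc (Suc n)"
    using ge2.IH(1) degree_smult_le[of "a (Suc (Suc n))" "?Q (Suc n)"] by simp
  ultimately have "degree ([:V (Suc (Suc n)), -1:] * ?Q (Suc (Suc n))
      - smult (a (Suc (Suc n))) (?Q (Suc n))) = Suc (Suc n)"
    by (simp add: degree_add_eq_left diff_conv_add_uminus del: add_uminus_conv_diff)
  then show ?case using b[of "Suc (Suc n)"] by auto
qed simp

lemma degree_three_term_poly_10_le: "degree (three_term_poly a b V 1 0 y) \<le> y - 2"
proof (induction y rule: induct_nat_012)
  case (ge2 n)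
  let ?P = "three_term_poly a b V 1 0"
  have "degree ([:V (Suc n), -1:] * ?P (Suc n)) \<le> n"
  proof (cases n)
    case (Suc m)
    then show ?thesis using ge2.IH(2) degree_mult_le[of "[:V (Suc n), -1:]" "?P (Suc n)"] by simp
  qed simp
  moreover have "degree (smult (a (Suc n)) (?P n)) \<le> n"
    using ge2.IH(1) degree_smult_le[of "a (Suc n)" "?P n"] by simp
  ultimately show ?case
    using degree_diff_le degree_smult_le order_trans by (simp, blast)
qed simp_all

section \<open>Spectral decimation\<close>

(* Think of s j, t j, u j as f (N j), f (N j + 1), f (N j - 1) for a solution f of a chain made of
   cells of length N: crossing a cell is the unimodular map with entries delta, eta, alpha, and
   junction is the recurrence at the coarse site N j, whose coefficients are A j and B j. *)
locale decimation =
  fixes s t u :: "nat \<Rightarrow> complex" and A B :: "nat \<Rightarrow> real" and \<alpha> \<delta> \<eta> c :: complex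
  assumes s_0: "s 0 = 1" and t_0: "t 0 = c"
    and s_Suc: "\<And>j. s (Suc j) = \<delta> * s j + \<eta> * t j"
    and u_Suc: "\<And>j. u (Suc j) = \<alpha> * s j - \<delta> * t j"
    and junction: "\<And>j. 1 \<le> j \<Longrightarrow> of_real (B j) * t j = c * s j - of_real (A j) * u j"
    and AB: "\<And>j. 1 \<le> j \<Longrightarrow> 0 < A j \<and> 0 < B j \<and> A j + B j = 1"
    and det: "\<alpha> * \<eta> + \<delta>\<^sup>2 = 1"
begin

definition "E j = c * s j - u j"
definition "G = \<eta> * c\<^sup>2 + 2 * \<delta> * c - \<alpha>"
definition "\<rho> = c * \<eta> + \<delta>"

lemma s_1: "s 1 = \<rho>"
  using s_Suc[of 0] s_0 t_0 unfolding \<rho>_def by (simp add: algebra_simps)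

lemma E_1: "E 1 = G"
  using s_Suc[of 0] u_Suc[of 0] s_0 t_0 unfolding E_def G_def
  by (simp add: algebra_simps power2_eq_square)

lemma eta_mult_G: "\<eta> * G = \<rho>\<^sup>2 - 1"
proof -
  have "\<eta> * G - (\<rho>\<^sup>2 - 1) = 1 - (\<alpha> * \<eta> + \<delta>\<^sup>2)"
    unfolding G_def \<rho>_def by (simp add: algebra_simps power2_eq_square)
  then show ?thesis using det by simp
qed

lemma t_eq:
  assumes "1 \<le> j"
  shows "t j = c * s j + of_real (A j / B j) * E j"
proof -
  have "B j \<noteq> 0" and A: "A j = 1 - B j" using AB[OF assms] by auto
  moreover have "of_real (B j) * t j = of_real (B j) * (c * s j) + of_real (A j) * E j"
    unfolding junction[OF assms] E_def A by (simp add: algebra_simps)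
  ultimately show ?thesis by (simp add: field_simps)
qed

lemma E_Suc:
  assumes "1 \<le> j"
  shows "E (Suc j) = G * s j + \<rho> * of_real (A j / B j) * E j"
proof -
  have "E (Suc j) = (c * \<delta> - \<alpha>) * s j + \<rho> * t j"
    unfolding E_def s_Suc u_Suc \<rho>_def by (simp add: algebra_simps)
  then show ?thesis
    unfolding t_eq[OF assms] G_def \<rho>_def by (simp add: algebra_simps power2_eq_square)
qed

lemma eta_mult_E:
  assumes "1 \<le> j"
  shows "\<eta> * E j = \<rho> * s j - s (j - 1)"
proof -
  obtain i where j: "j = Suc i" using assms by (cases j) auto
  have "\<eta> * E j - (\<rho> * s j - s (j - 1)) = s i * (1 - (\<alpha> * \<eta> + \<delta>\<^sup>2))"
    unfolding j E_def s_Suc u_Suc \<rho>_def by (simp add: algebra_simps power2_eq_square)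
  then show ?thesis using det by simp
qed

lemma s_recurrence:
  assumes "1 \<le> j"
  shows "of_real (B j) * s (j + 1) = \<rho> * s j - of_real (A j) * s (j - 1)"
proof -
  have A: "of_real (A j) = 1 - of_real (B j)"
    using AB[OF assms] by (simp add: algebra_simps flip: of_real_add)
  have \<eta>u: "\<eta> * u j = \<eta> * c * s j - (\<rho> * s j - s (j - 1))"
    using eta_mult_E[OF assms] unfolding E_def by (simp add: algebra_simps)
  have "of_real (B j) * s (j + 1) = of_real (B j) * \<delta> * s j + \<eta> * (of_real (B j) * t j)"
    by (simp add: s_Suc algebra_simps)
  also have "\<dots> = of_real (B j) * \<delta> * s j + \<eta> * c * s j - of_real (A j) * (\<eta> * u j)"
    unfolding junction[OF assms] by (simp add: algebra_simps)
  also have "\<dots> = \<rho> * s j - of_real (A j) * s (j - 1)"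
    unfolding \<eta>u A \<rho>_def by (simp add: algebra_simps)
  finally show ?thesis .
qed

lemma E_eq_0_if_G_eq_0:
  assumes "G = 0" "1 \<le> j"
  shows "E j = 0"
  using assms(2)
proof (induction j rule: nat_induct_at_least)
  case base
  then show ?case using E_1 assms(1) by simp
next
  case (Suc j)
  then show ?case using E_Suc[of j] assms(1) by simp
qed

lemma E_closed_form_if_eta_eq_0:
  assumes "\<eta> = 0" "1 \<le> j"
  shows "\<exists>w::real. 1 \<le> w \<and> E j = G * \<delta> ^ (j - 1) * of_real w"
  using assms(2)
proof (induction j rule: nat_induct_at_least)
  case base
  then show ?case using E_1 by (intro exI[of _ 1]) simp
next
  case (Suc j)
  then obtain w where w: "1 \<le> w" "E j = G * \<delta> ^ (j - 1) * of_real w" by blast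
  have s: "s i = \<delta> ^ i" for i
    by (induction i) (simp_all add: s_0 s_Suc assms(1))
  have "\<rho> = \<delta>" unfolding \<rho>_def using assms(1) by simp
  then have "E (Suc j) = G * \<delta> ^ (Suc j - 1) * of_real (1 + A j / B j * w)"
    using E_Suc[OF Suc.hyps] w(2) s Suc.hyps by (cases j) (simp_all add: algebra_simps)
  moreover have "0 \<le> A j / B j * w" using AB[OF Suc.hyps] w(1) by simp
  ultimately show ?case by (intro exI[of _ "1 + A j / B j * w"]) simp
qed

lemma E_eq_0_iff:
  assumes K: "1 \<le> K"
  shows "E K = 0 \<longleftrightarrow> (\<rho> * s K - s (K - 1) = 0 \<and> \<rho>\<^sup>2 \<noteq> 1) \<or> G = 0"
proof (cases "\<eta> = 0")
  case True
  then have "\<delta> \<noteq> 0" using det by auto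
  with E_closed_form_if_eta_eq_0[OF True K] have "E K = 0 \<longleftrightarrow> G = 0" by force
  moreover have "\<rho>\<^sup>2 = 1" using eta_mult_G True by simp
  ultimately show ?thesis by simp
next
  case False
  then have "E K = 0 \<longleftrightarrow> \<rho> * s K - s (K - 1) = 0" using eta_mult_E[OF K] by (metis mult_eq_0_iff)
  moreover have "\<rho>\<^sup>2 = 1 \<longleftrightarrow> G = 0" using eta_mult_G False by (metis eq_iff_diff_eq_0 mult_eq_0_iff)
  ultimately show ?thesis using E_eq_0_if_G_eq_0[OF _ K] by blast
qed

lemma s_eq_three_term: "s j = three_term (of_real \<circ> A) (of_real \<circ> B) (\<lambda>_. 1) (1 - \<rho>) 1 \<rho> j"
proof -
  have "s j = three_term (of_real \<circ> A) (of_real \<circ> B) (\<lambda>_. 1) (1 - \<rho>) (s 0) (s 1) j"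
  proof (rule three_term_unique[of "Suc j"])
    fix i :: nat assume "1 \<le> i"
    then show "(of_real \<circ> B) i * s (i + 1) = (1 - (1 - \<rho>)) * s i - (of_real \<circ> A) i * s (i - 1)"
      using s_recurrence by simp
    show "(of_real \<circ> B) i \<noteq> 0" using AB[OF \<open>1 \<le> i\<close>] by simp
  qed simp
  then show ?thesis using s_0 s_1 by simp
qed

lemma mat_spec_coarse_iff:
  assumes K: "1 \<le> K"
  shows "1 - \<rho> \<in> mat_spec K (tridiag K 1 1 (\<lambda>_. 1) A B) \<longleftrightarrow> \<rho> * s K - s (K - 1) = 0"
proof (subst mat_spec_tridiag_iff[OF K])
  show "B i \<noteq> 0" if "0 < i" for i using AB[of i] that by simp
qed (simp add: s_eq_three_term comp_def)

theorem E_eq_0_iff_mat_spec: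
  assumes K: "1 \<le> K"
  shows "E K = 0 \<longleftrightarrow> (1 - \<rho> \<in> mat_spec K (tridiag K 1 1 (\<lambda>_. 1) A B) \<and> \<rho>\<^sup>2 \<noteq> 1) \<or> G = 0"
  using E_eq_0_iff[OF K] mat_spec_coarse_iff[OF K] by simp

end

definition decimation_poly :: "nat \<Rightarrow> (nat \<Rightarrow> real) \<Rightarrow> (nat \<Rightarrow> real) \<Rightarrow> (nat \<Rightarrow> real) \<Rightarrow> real poly" where
  "decimation_poly N a b V =
     1 - three_term_poly a b V 1 0 N - [:V 0, -1:] * three_term_poly a b V 0 1 N"

lemma degree_decimation_poly:
  assumes "2 \<le> N" and b: "\<And>x. 0 < x \<Longrightarrow> b x \<noteq> 0"
  shows "degree (decimation_poly N a b V) = N"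
proof -
  let ?X = "[:V 0, -1:] * three_term_poly a b V 0 1 N"
  have "three_term_poly a b V 0 1 (Suc (N - 1)) \<noteq> 0 \<and>
      degree (three_term_poly a b V 0 1 (Suc (N - 1))) = N - 1"
    using b by (rule degree_three_term_poly_01)
  then have X: "degree ?X = N" using \<open>2 \<le> N\<close> by (subst degree_mult_eq) auto
  have "degree (1 - three_term_poly a b V 1 0 N) \<le> N - 2"
    using degree_three_term_poly_10_le by (intro degree_diff_le) auto
  then have lt: "degree (1 - three_term_poly a b V 1 0 N) < degree (- ?X)"
    unfolding degree_minus X using \<open>2 \<le> N\<close> by linarith
  show ?thesis
    by (simp only: decimation_poly_def diff_conv_add_uminus[of _ ?X] degree_add_eq_right[OF lt]
        degree_minus X)
qed

locale self_similar_chain =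
  fixes N :: nat and a b V :: "nat \<Rightarrow> real"
  assumes N_ge_2: "2 \<le> N"
    and prob: "\<And>x. 0 < x \<Longrightarrow> 0 < a x \<and> 0 < b x \<and> a x + b x = 1"
    and periodic: "\<And>j y. 0 < y \<Longrightarrow> y < N \<Longrightarrow>
      a (N * j + y) = a y \<and> b (N * j + y) = b y \<and> V (N * j + y) = V y"
    and symmetric: "\<And>y. 0 < y \<Longrightarrow> y < N \<Longrightarrow> a (N - y) = b y \<and> V (N - y) = V y"
    and self_similar: "\<And>j. 0 < j \<Longrightarrow> a (N * j) = a j \<and> b (N * j) = b j \<and> V (N * j) = V 0"
begin

abbreviation sol :: "complex \<Rightarrow> complex \<Rightarrow> complex \<Rightarrow> nat \<Rightarrow> complex" where
  "sol \<equiv> three_term (of_real \<circ> a) (of_real \<circ> b) (of_real \<circ> V)"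

definition "\<rho> z = (of_real (V 0) - z) * sol z 0 1 N + sol z 1 0 N"
definition "G z = sol z 0 1 N * (of_real (V 0) - z)\<^sup>2 + 2 * sol z 1 0 N * (of_real (V 0) - z)
  - sol z 1 0 (N - 1)"

lemma b_nonzero: "0 < x \<Longrightarrow> b x \<noteq> 0"
  using prob[of x] by simp

lemma poly_decimation_poly: "poly (map_poly of_real (decimation_poly N a b V)) z = 1 - \<rho> z"
  by (simp only: decimation_poly_def map_poly_of_real_diff map_poly_of_real_mult poly_diff poly_mult
      poly_three_term_poly) (simp add: \<rho>_def map_poly_pCons algebra_simps)

lemma decimation_samples:
  fixes z :: complex
  defines "f \<equiv> sol z 1 (of_real (V 0) - z)"
  shows "decimation (\<lambda>j. f (N * j)) (\<lambda>j. f (N * j + 1)) (\<lambda>j. f (N * j - 1)) a b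
    (sol z 1 0 (N - 1)) (sol z 1 0 N) (sol z 0 1 N) (of_real (V 0) - z)"
proof -
  have b: "(of_real \<circ> b) x \<noteq> 0" if "0 < x" for x using b_nonzero[OF that] by simp
  have cell: "f (N * j + y) = f (N * j) * sol z 1 0 y + f (N * j + 1) * sol z 0 1 y"
    if "y \<le> N" for j y
    unfolding f_def by (rule three_term_periodic_cell[OF b _ that]) (simp_all add: periodic)
  have W: "sol z 1 0 (N - 1) * sol z 0 1 N - sol z 1 0 N * sol z 0 1 (N - 1) = 1"
    and refl: "sol z 0 1 (N - 1) = - sol z 1 0 N"
    using three_term_symmetric_cell[OF N_ge_2, of "of_real \<circ> b" "of_real \<circ> a" "of_real \<circ> V" z]
      symmetric b by auto
  show ?thesis
  proof
    show "f (N * 0) = 1" "f (N * 0 + 1) = of_real (V 0) - z" by (simp_all add: f_def)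
    fix j
    show "f (N * Suc j) = sol z 1 0 N * f (N * j) + sol z 0 1 N * f (N * j + 1)"
      using cell[of N j] by (simp add: algebra_simps)
    have "N * Suc j - 1 = N * j + (N - 1)" using N_ge_2 by simp
    then show "f (N * Suc j - 1) = sol z 1 0 (N - 1) * f (N * j) - sol z 1 0 N * f (N * j + 1)"
      using cell[of "N - 1" j] refl by simp
  next
    fix j :: nat assume j: "1 \<le> j"
    then have "0 < N * j" using N_ge_2 by simp
    then have "(of_real \<circ> b) (N * j) * f (N * j + 1) =
        ((of_real \<circ> V) (N * j) - z) * f (N * j) - (of_real \<circ> a) (N * j) * f (N * j - 1)"
      unfolding f_def using b by (intro three_term_step) auto
    then show "of_real (b j) * f (N * j + 1) =
        (of_real (V 0) - z) * f (N * j) - of_real (a j) * f (N * j - 1)"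
      using self_similar[of j] j by simp
    show "0 < a j \<and> 0 < b j \<and> a j + b j = 1" using prob j by simp
  next
    show "sol z 1 0 (N - 1) * sol z 0 1 N + (sol z 1 0 N)\<^sup>2 = 1"
      using W refl by (simp add: power2_eq_square)
  qed
qed

theorem mat_spec_iff:
  assumes K: "1 \<le> K"
  shows "z \<in> mat_spec (N * K) (tridiag (N * K) (V 0) (V 0) V a b) \<longleftrightarrow>
    (1 - \<rho> z \<in> mat_spec K (tridiag K 1 1 (\<lambda>_. 1) a b) \<and> (\<rho> z)\<^sup>2 \<noteq> 1) \<or> G z = 0"
proof -
  define f where "f = sol z 1 (of_real (V 0) - z)"
  interpret d: decimation "\<lambda>j. f (N * j)" "\<lambda>j. f (N * j + 1)" "\<lambda>j. f (N * j - 1)" a b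
    "sol z 1 0 (N - 1)" "sol z 1 0 N" "sol z 0 1 N" "of_real (V 0) - z"
    unfolding f_def by (rule decimation_samples)
  have "z \<in> mat_spec (N * K) (tridiag (N * K) (V 0) (V 0) V a b) \<longleftrightarrow>
      (of_real (V 0) - z) * f (N * K) - f (N * K - 1) = 0"
    unfolding f_def using K N_ge_2 b_nonzero by (intro mat_spec_tridiag_iff) auto
  also have "\<dots> \<longleftrightarrow> d.E K = 0" unfolding d.E_def by simp
  also have "\<dots> \<longleftrightarrow> (1 - \<rho> z \<in> mat_spec K (tridiag K 1 1 (\<lambda>_. 1) a b) \<and> (\<rho> z)\<^sup>2 \<noteq> 1) \<or> G z = 0"
    using d.E_eq_0_iff_mat_spec[OF K] unfolding d.\<rho>_def \<rho>_def d.G_def G_def .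
  finally show ?thesis .
qed

theorem mat_spec_decomposition:
  assumes K: "1 \<le> K"
  shows "mat_spec (N * K) (tridiag (N * K) (V 0) (V 0) V a b) =
    poly_preimage (decimation_poly N a b V) (mat_spec K (tridiag K 1 1 (\<lambda>_. 1) a b) - {0, 2})
    \<union> mat_spec N (tridiag N (V 0) (V 0) V a b)"
proof -
  have \<rho>: "1 - \<rho> z \<in> {0, 2} \<longleftrightarrow> (\<rho> z)\<^sup>2 = 1" for z
    unfolding power2_eq_1_iff by (auto simp: add_eq_0_iff minus_equation_iff)
  have G: "z \<in> mat_spec N (tridiag N (V 0) (V 0) V a b) \<longleftrightarrow> G z = 0" for z
    using mat_spec_iff[of 1 z] mat_spec_tridiag_1[of "\<lambda>_. 1" a b] \<rho>[of z] by auto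
  show ?thesis
  proof (intro set_eqI)
    fix z
    show "z \<in> mat_spec (N * K) (tridiag (N * K) (V 0) (V 0) V a b) \<longleftrightarrow>
      z \<in> poly_preimage (decimation_poly N a b V) (mat_spec K (tridiag K 1 1 (\<lambda>_. 1) a b) - {0, 2})
        \<union> mat_spec N (tridiag N (V 0) (V 0) V a b)"
      using mat_spec_iff[OF K, of z] G[of z] \<rho>[of z]
      unfolding poly_preimage_def poly_decimation_poly Un_iff mem_Collect_eq Diff_iff by blast
  qed
qed

end

section \<open>The self-similar almost Mathieu operator\<close>

lemma m3_eq_multiplicity:
  assumes "x \<noteq> 0"
  shows "m3 x = multiplicity 3 x"
  unfolding m3_def
proof (rule Greatest_equality)
  show "3 ^ multiplicity 3 x dvd x" by (rule multiplicity_dvd)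
  show "y \<le> multiplicity 3 x" if "3 ^ y dvd x" for y
    using multiplicity_geI[OF assms _ that] by simp
qed

(* The last nonzero digit of x in base 3: the residue r in trans_p. *)
definition digit3 :: "nat \<Rightarrow> nat" where
  "digit3 x = (x div 3 ^ m3 x) mod 3"

lemma digit3_pow_mult:
  assumes "\<not> 3 dvd X"
  shows "digit3 (3 ^ m * X) = X mod 3"
proof -
  have "X \<noteq> 0" using assms by (metis dvd_0_right)
  then have "m3 (3 ^ m * X) = m"
    using m3_eq_multiplicity multiplicity_decomposeI[OF refl assms] by simp
  then show ?thesis by (simp add: digit3_def)
qed

lemma digit3_factor:
  assumes "x \<noteq> 0"
  obtains m X where "x = 3 ^ m * X" "\<not> 3 dvd X" "digit3 x = X mod 3"
proof -
  have "\<not> is_unit (3::nat)" by simp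
  then obtain X where "x = 3 ^ multiplicity 3 x * X" "\<not> 3 dvd X"
    using multiplicity_decompose'[OF assms] by blast
  with that digit3_pow_mult show ?thesis by metis
qed

lemma digit3_factor_below:
  assumes "0 < y" "y < 3 ^ n"
  obtains m X where "y = 3 ^ m * X" "\<not> 3 dvd X" "digit3 y = X mod 3"
    and "(3::nat) ^ n = 3 ^ m * (3 * 3 ^ (n - Suc m))"
proof -
  obtain m X where y: "y = 3 ^ m * X" "\<not> 3 dvd X" "digit3 y = X mod 3"
    using digit3_factor assms(1) by blast
  have "(3::nat) ^ m \<le> y" using assms(1) y(1) by (simp add: dvd_imp_le)
  then have "m < n"
    using assms(2) by (meson le_less_trans nat_power_less_imp_less zero_less_numeral)
  then have "(3::nat) ^ n = 3 ^ m * (3 * 3 ^ (n - Suc m))"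
    by (metis Suc_diff_Suc power_Suc power_add le_add_diff_inverse less_imp_le_nat)
  with that y show ?thesis by blast
qed

lemma digit3_cases:
  assumes "0 < x"
  shows "digit3 x = 1 \<or> digit3 x = 2"
proof -
  obtain m X where "\<not> 3 dvd X" "digit3 x = X mod 3"
    using digit3_factor assms by blast
  then show ?thesis by presburger
qed

lemma digit3_cell_shift:
  assumes "0 < y" "y < 3 ^ n"
  shows "digit3 (3 ^ n * j + y) = digit3 y"
proof -
  obtain m X where y: "y = 3 ^ m * X" "\<not> 3 dvd X" "digit3 y = X mod 3"
    and n: "(3::nat) ^ n = 3 ^ m * (3 * 3 ^ (n - Suc m))"
    using digit3_factor_below[OF assms] by blast
  let ?X = "3 * (3 ^ (n - Suc m) * j) + X"
  have "3 ^ n * j + y = 3 ^ m * ?X" unfolding n y(1) by (simp add: algebra_simps)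
  moreover have "\<not> 3 dvd ?X" "?X mod 3 = X mod 3" using y(2) by (simp_all add: dvd_add_right_iff)
  ultimately show ?thesis using y(3) by (simp add: digit3_pow_mult)
qed

lemma digit3_pow_mult_self:
  assumes "0 < j"
  shows "digit3 (3 ^ n * j) = digit3 j"
proof -
  obtain m X where j: "j = 3 ^ m * X" "\<not> 3 dvd X" "digit3 j = X mod 3"
    using digit3_factor assms by blast
  then have "3 ^ n * j = 3 ^ (n + m) * X" by (simp add: power_add)
  then show ?thesis using j(2,3) by (simp add: digit3_pow_mult)
qed

lemma digit3_reflect:
  assumes "0 < y" "y < 3 ^ n"
  shows "digit3 (3 ^ n - y) = 3 - digit3 y"
proof -
  obtain m X where y: "y = 3 ^ m * X" "\<not> 3 dvd X" "digit3 y = X mod 3"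
    and n: "(3::nat) ^ n = 3 ^ m * (3 * 3 ^ (n - Suc m))"
    using digit3_factor_below[OF assms] by blast
  define T where "T = (3::nat) ^ (n - Suc m)"
  have "3 ^ m * X < 3 ^ m * (3 * T)" using assms(2) unfolding y(1) n T_def .
  then have "X < 3 * T" by simp
  have X3: "X = 3 * (X div 3) + X mod 3" "X mod 3 < 3" "X mod 3 \<noteq> 0"
    using y(2) by (auto simp: dvd_eq_mod_eq_0)
  then have "3 * T - X = 3 * (T - X div 3 - 1) + (3 - X mod 3)" using \<open>X < 3 * T\<close> by arith
  then have "(3 * T - X) mod 3 = 3 - X mod 3" using X3 by (simp only: mod_mult_self4) simp
  moreover from this have "\<not> 3 dvd (3 * T - X)" using X3 by (simp add: dvd_eq_mod_eq_0)
  moreover have "3 ^ n - y = 3 ^ m * (3 * T - X)"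
    unfolding n y(1) T_def by (simp add: diff_mult_distrib2)
  ultimately show ?thesis using y(3) by (simp add: digit3_pow_mult)
qed

definition left_prob :: "real \<Rightarrow> nat \<Rightarrow> real" where
  "left_prob p x = trans_p p x (x - 1)"

definition right_prob :: "real \<Rightarrow> nat \<Rightarrow> real" where
  "right_prob p x = trans_p p x (x + 1)"

lemma left_prob_eq: "0 < x \<Longrightarrow> left_prob p x = (if digit3 x = 1 then 1 - p else p)"
  using digit3_cases[of x] unfolding left_prob_def trans_p_def Let_def digit3_def[symmetric] by auto

lemma right_prob_eq: "0 < x \<Longrightarrow> right_prob p x = 1 - left_prob p x"
  using digit3_cases[of x] left_prob_eq[of x]
  unfolding right_prob_def trans_p_def Let_def digit3_def[symmetric] by auto

lemma digit3_1: "digit3 1 = 1" and digit3_2: "digit3 2 = 2"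
  using digit3_pow_mult[of 1 0] digit3_pow_mult[of 2 0] by simp_all

definition am_pot :: "real \<Rightarrow> real \<Rightarrow> nat \<Rightarrow> real" where
  "am_pot \<beta> \<alpha> x = \<beta> * cos (2 * pi * \<alpha> * real x)"

lemma am_pot_0 [simp]: "am_pot \<beta> \<alpha> 0 = \<beta>"
  by (simp add: am_pot_def)

lemma cos_add_2npi: "cos (x + 2 * real n * pi) = cos x"
  by (simp add: cos_add)

lemma am_pot_periodic:
  assumes "0 < N"
  shows "am_pot \<beta> (real k / real N) (N * j + y) = am_pot \<beta> (real k / real N) y"
proof -
  have "2 * pi * (real k / real N) * real (N * j + y) =
      2 * pi * (real k / real N) * real y + 2 * real (k * j) * pi"
    using assms by (simp add: field_simps)
  then show ?thesis by (simp only: am_pot_def cos_add_2npi)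
qed

lemma am_pot_reflect:
  assumes "y \<le> N"
  shows "am_pot \<beta> (real k / real N) (N - y) = am_pot \<beta> (real k / real N) y"
proof (cases "N = 0")
  case False
  have "2 * pi * (real k / real N) * real (N - y) =
      2 * real k * pi - 2 * pi * (real k / real N) * real y"
    using assms False by (simp add: field_simps of_nat_diff)
  then show ?thesis by (simp add: am_pot_def cos_diff)
qed (use assms in simp)

lemma am_pot_level_1:
  assumes "k \<in> {1, 2}"
  shows "am_pot \<beta> (real k / 3) 1 = - \<beta> / 2" and "am_pot \<beta> (real k / 3) 2 = - \<beta> / 2"
proof -
  have c: "cos (2 * pi / 3) = - 1 / 2" "cos (4 * pi / 3) = - 1 / 2" "cos (8 * pi / 3) = - 1 / 2"
  proof -
    show c1: "cos (2 * pi / 3) = - 1 / 2" by (rule cos_120)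
    have "4 * pi / 3 = 2 * pi - 2 * pi / 3" by simp
    then show "cos (4 * pi / 3) = - 1 / 2" using c1 by (simp only: cos_2pi_minus)
    have "8 * pi / 3 = 2 * pi / 3 + 2 * pi" by simp
    then show "cos (8 * pi / 3) = - 1 / 2" using c1 by (simp only: cos_periodic)
  qed
  show "am_pot \<beta> (real k / 3) 1 = - \<beta> / 2" "am_pot \<beta> (real k / 3) 2 = - \<beta> / 2"
    using assms c by (auto simp: am_pot_def mult.commute)
qed

lemma H_mat_eq_tridiag:
  assumes "n \<le> l"
  shows "H_mat p \<beta> (real k / 3 ^ n) 0 l =
    tridiag (3 ^ l) \<beta> \<beta> (am_pot \<beta> (real k / 3 ^ n)) (left_prob p) (right_prob p)"
proof -
  have "cos (2 * pi * (real k / 3 ^ n) * 3 ^ l + 0) =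
      am_pot 1 (real k / real (3 ^ n)) (3 ^ n * 3 ^ (l - n))"
    using assms by (simp add: am_pot_def flip: power_add)
  also have "\<dots> = 1" using am_pot_periodic[of "3 ^ n" 1 k "3 ^ (l - n)" 0] by simp
  finally have end_pot: "cos (2 * pi * (real k / 3 ^ n) * 3 ^ l + 0) = 1" .
  show ?thesis
    unfolding H_mat_def tridiag_def end_pot am_pot_def left_prob_def right_prob_def
    by (intro ext) auto
qed

lemma Lap_mat_eq_tridiag: "Lap_mat p m = tridiag (3 ^ m) 1 1 (\<lambda>_. 1) (left_prob p) (right_prob p)"
  unfolding Lap_mat_def tridiag_def left_prob_def right_prob_def by (intro ext) auto

lemma self_similar_chain_almost_Mathieu:
  assumes "0 < p" "p < 1" "1 \<le> n"
  shows "self_similar_chain (3 ^ n) (left_prob p) (right_prob p) (am_pot \<beta> (real k / 3 ^ n))"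
proof
  show "2 \<le> (3::nat) ^ n" using power_increasing[OF assms(3), of "3::nat"] by simp
next
  fix x :: nat assume "0 < x"
  then show "0 < left_prob p x \<and> 0 < right_prob p x \<and> left_prob p x + right_prob p x = 1"
    using assms by (simp add: left_prob_eq right_prob_eq)
next
  fix j y :: nat assume y: "0 < y" "y < 3 ^ n"
  then show "left_prob p (3 ^ n * j + y) = left_prob p y
    \<and> right_prob p (3 ^ n * j + y) = right_prob p y
    \<and> am_pot \<beta> (real k / 3 ^ n) (3 ^ n * j + y) = am_pot \<beta> (real k / 3 ^ n) y"
    using digit3_cell_shift[OF y] am_pot_periodic[of "3 ^ n" \<beta> k j y]
    by (simp add: left_prob_eq right_prob_eq)
next
  fix y :: nat assume y: "0 < y" "y < 3 ^ n"
  then show "left_prob p (3 ^ n - y) = right_prob p y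
    \<and> am_pot \<beta> (real k / 3 ^ n) (3 ^ n - y) = am_pot \<beta> (real k / 3 ^ n) y"
    using digit3_reflect[OF y] digit3_cases[of y] am_pot_reflect[of y "3 ^ n" \<beta> k]
    by (auto simp: left_prob_eq right_prob_eq)
next
  fix j :: nat assume j: "0 < j"
  then show "left_prob p (3 ^ n * j) = left_prob p j \<and> right_prob p (3 ^ n * j) = right_prob p j
    \<and> am_pot \<beta> (real k / 3 ^ n) (3 ^ n * j) = am_pot \<beta> (real k / 3 ^ n) 0"
    using digit3_pow_mult_self[OF j] am_pot_periodic[of "3 ^ n" \<beta> k j 0]
    by (simp add: left_prob_eq right_prob_eq)
qed

lemma poly_decimation_poly_3:
  assumes "a 1 = 1 - p" "b 1 = p" "a 2 = p" "b 2 = 1 - p" "V 1 = - V 0 / 2" "V 2 = - V 0 / 2"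
    and "p \<noteq> 0" "p \<noteq> 1"
  shows "poly (decimation_poly 3 a b V) z =
    (- V 0 + 2 * p - 2 * z) * ((V 0)\<^sup>2 + 2 * V 0 * p + V 0 * z - 2 * p * z - 2 * p - 2 * z\<^sup>2 + 2)
    / (4 * p * (1 - p))"
proof -
  define q where "q = 1 - p"
  have "q \<noteq> 0" using assms(8) by (simp add: q_def)
  have 3: "(3::nat) = Suc (Suc (Suc 0))" by simp
  have coeffs: "a (Suc 0) = q" "b (Suc 0) = p" "a (Suc (Suc 0)) = p" "b (Suc (Suc 0)) = q"
      "V (Suc 0) = - V 0 / 2" "V (Suc (Suc 0)) = - V 0 / 2"
    using assms(1-6) by (simp_all add: q_def numeral_2_eq_2)
  let ?P = "poly (three_term_poly a b V 1 0 3) z" and ?Q = "poly (three_term_poly a b V 0 1 3) z"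
  have P: "?P * p = V 0 / 2 + z"
    unfolding 3 using assms(7) \<open>q \<noteq> 0\<close> by (simp add: coeffs field_simps)
  have Q: "?Q * (p * q) = (V 0 / 2 + z)\<^sup>2 - p\<^sup>2"
    unfolding 3 using assms(7) \<open>q \<noteq> 0\<close> by (simp add: coeffs field_simps power2_eq_square)
  have "poly (decimation_poly 3 a b V) z * (4 * p * q) =
      4 * p * q - 4 * q * (?P * p) - 4 * (V 0 - z) * (?Q * (p * q))"
    by (simp add: decimation_poly_def algebra_simps)
  also have "\<dots> = (- V 0 + 2 * p - 2 * z) *
      ((V 0)\<^sup>2 + 2 * V 0 * p + V 0 * z - 2 * p * z - 2 * p - 2 * z\<^sup>2 + 2)"
    unfolding P Q unfolding q_def by (simp add: algebra_simps power2_eq_square)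
  finally show ?thesis using assms(7) \<open>q \<noteq> 0\<close> by (simp add: q_def eq_divide_eq)
qed

lemma sigma_Lap_0: "sigma_Lap p 0 = {0, 2}"
  unfolding sigma_Lap_def Lap_mat_eq_tridiag power_0 by (rule mat_spec_tridiag_1)

lemma poly_decimation_poly_almost_Mathieu_3:
  assumes "0 < p" "p < 1" "k \<in> {1, 2}"
  shows "poly (decimation_poly 3 (left_prob p) (right_prob p) (am_pot \<beta> (real k / 3))) z =
    (- \<beta> + 2 * p - 2 * z) * (\<beta>\<^sup>2 + 2 * \<beta> * p + \<beta> * z - 2 * p * z - 2 * p - 2 * z\<^sup>2 + 2)
    / (4 * p * (1 - p))"
  using poly_decimation_poly_3[of "left_prob p" p "right_prob p" "am_pot \<beta> (real k / 3)" z]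
    assms am_pot_level_1[OF assms(3)] digit3_1 digit3_2
  by (simp add: left_prob_eq right_prob_eq)

lemma sigma_H_decomposition:
  assumes "0 < p" "p < 1" "1 \<le> n" "n \<le> l"
  shows "sigma_H p \<beta> (real k / 3 ^ n) 0 l =
    poly_preimage (decimation_poly (3 ^ n) (left_prob p) (right_prob p) (am_pot \<beta> (real k / 3 ^ n)))
      (sigma_Lap p (l - n) - sigma_Lap p 0)
    \<union> sigma_H p \<beta> (real k / 3 ^ n) 0 n"
proof -
  interpret self_similar_chain "3 ^ n" "left_prob p" "right_prob p" "am_pot \<beta> (real k / 3 ^ n)"
    using assms(1-3) by (rule self_similar_chain_almost_Mathieu)
  have "(3::nat) ^ l = 3 ^ n * 3 ^ (l - n)" using assms(4) by (simp flip: power_add)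
  then show ?thesis
    using mat_spec_decomposition[of "3 ^ (l - n)"] unfolding sigma_Lap_0
    unfolding sigma_H_def sigma_Lap_def H_mat_eq_tridiag[OF assms(4)] H_mat_eq_tridiag[OF order_refl]
      Lap_mat_eq_tridiag
    by simp
qed

theorem theorem3p1:
  fixes p \<beta> :: real and n k :: nat
  assumes "0 < p" "p < 1" "1 \<le> n" "k < 3 ^ n"
  shows "\<exists>R :: real poly. degree R = 3 ^ n \<and>
     (\<forall>l. n \<le> l \<longrightarrow>
        sigma_H p \<beta> (real k / 3 ^ n) 0 l =
          poly_preimage R (sigma_Lap p (l - n) - sigma_Lap p 0)
          \<union> sigma_H p \<beta> (real k / 3 ^ n) 0 n) \<and>
     (n = 1 \<and> k \<in> {1, 2} \<longrightarrow>
        (\<forall>z. poly R z =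
           ((- \<beta> + 2 * p - 2 * z) *
            (\<beta>^2 + 2 * \<beta> * p + \<beta> * z - 2 * p * z - 2 * p - 2 * z^2 + 2))
           / (4 * p * (1 - p))))"
proof -
  let ?R = "decimation_poly (3 ^ n) (left_prob p) (right_prob p) (am_pot \<beta> (real k / 3 ^ n))"
  have chain: "self_similar_chain (3 ^ n) (left_prob p) (right_prob p) (am_pot \<beta> (real k / 3 ^ n))"
    using assms(1-3) by (rule self_similar_chain_almost_Mathieu)
  have "degree ?R = 3 ^ n"
    using self_similar_chain.N_ge_2[OF chain] self_similar_chain.b_nonzero[OF chain]
    by (rule degree_decimation_poly)
  moreover have "sigma_H p \<beta> (real k / 3 ^ n) 0 l =
      poly_preimage ?R (sigma_Lap p (l - n) - sigma_Lap p 0) \<union> sigma_H p \<beta> (real k / 3 ^ n) 0 n"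
    if "n \<le> l" for l
    using assms(1-3) that by (rule sigma_H_decomposition)
  moreover have "\<forall>z. poly ?R z = ((- \<beta> + 2 * p - 2 * z) *
      (\<beta>^2 + 2 * \<beta> * p + \<beta> * z - 2 * p * z - 2 * p - 2 * z^2 + 2)) / (4 * p * (1 - p))"
    if "n = 1" "k \<in> {1, 2}"
    using poly_decimation_poly_almost_Mathieu_3[OF assms(1,2) that(2)] that(1) by simp
  ultimately show ?thesis by blast
qed

end
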